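(* Let $r\geq q\geq p\geq2$ and $s\geq-\frac{2\alpha}{q}+\frac12-\frac1p$, where $\alpha>0$. For $f\in\mathcal H^s(\mathbb T^3)$, the free evolution $B_{f^\omega}=e^{-t(-\Delta)^\alpha}f^\omega$ satisfies $$\|B_{f^\omega}\|_{L^r_\omega L^q_tL^p_x}\lesssim\sqrt r\,\|f\|_{\mathcal H^s_x},$$ with implicit constant independent of $r$ and $f$.
   Context: $\mathcal H^s(\mathbb T^3)$ has norm $\|f\|_{\mathcal H^s}^2=\sum_{k\in\mathbb Z^3}(1+|k|^2)^s|a_k|^2$ where $f=\sum_ka_ke^{ik\cdot x}$, $a_k\in\mathbb C^3$. $(\Omega,\mathcal A,P)$ is a probability space and $(l_k(\omega))_{k\in\mathbb Z^3}$ are real-valued, zero-mean, independent random variables with distributions $\mu_k$ satisfying $\left|\int_{\mathbb R}e^{\gamma x}d\mu_k(x)\right|\le e^{c\gamma^2}$ for all $\gamma\in\mathbb R$, all $k$, for some $c>0$. The randomization is $f^\omega=\sum_kl_k(\omega)a_ke^{ik\cdot x}$ (componentwise) and $e^{-t(-\Delta)^\alpha}f^\omega=\sum_ke^{-t|k|^{2\alpha}}l_k(\omega)a_ke^{ik\cdot x}$. The norm $\|F\|_{L^r_\omega L^q_tL^p_x}=\big(\mathbb E\,\|F\|_{L^q(0,T;L^p(\mathbb T^3))}^r\big)^{1/r}$ for a time interval $(0,T)$. *)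

theory Defs
  imports "HOL-Analysis.Analysis" "HOL-Probability.Probability"
begin

text \<open>Real power on extended nonnegative reals (for positive exponent): infinity stays infinity.\<close>
definition epowr :: "ennreal \<Rightarrow> real \<Rightarrow> ennreal" where
  "epowr y e = (if y = \<infinity> then \<infinity> else ennreal (enn2real y powr e))"

definition knorm2 :: "int^3 \<Rightarrow> real" where
  "knorm2 k = (\<Sum>i\<in>UNIV. (real_of_int (k$i))^2)"

definition kdot :: "int^3 \<Rightarrow> real^3 \<Rightarrow> real" where
  "kdot k x = (\<Sum>i\<in>UNIV. real_of_int (k$i) * x$i)"

text \<open>Fundamental domain of the torus T^3 = [0,2 pi]^3.\<close>
definition torus :: "(real^3) set" where
  "torus = {x. \<forall>i. 0 \<le> x$i \<and> x$i \<le> 2*pi}"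

text \<open>f = sum_k a_k e^{ik.x} belongs to H^s.\<close>
definition in_Hs :: "real \<Rightarrow> (int^3 \<Rightarrow> complex^3) \<Rightarrow> bool" where
  "in_Hs s a \<longleftrightarrow> (\<lambda>k. (1 + knorm2 k) powr s * (norm (a k))^2) summable_on UNIV"

definition Hs_norm :: "real \<Rightarrow> (int^3 \<Rightarrow> complex^3) \<Rightarrow> real" where
  "Hs_norm s a = sqrt (\<Sum>\<^sub>\<infinity>k. (1 + knorm2 k) powr s * (norm (a k))^2)"

text \<open>Randomized free evolution e^{-t(-Delta)^alpha} f^omega evaluated at (omega,t,x).\<close>
definition free_evol :: "real \<Rightarrow> (int^3 \<Rightarrow> 'w \<Rightarrow> real) \<Rightarrow> (int^3 \<Rightarrow> complex^3)
    \<Rightarrow> 'w \<Rightarrow> real \<Rightarrow> real^3 \<Rightarrow> complex^3" where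
  "free_evol \<alpha> l a \<omega> t x =
     (\<Sum>\<^sub>\<infinity>k. (complex_of_real (exp (- t * (knorm2 k) powr \<alpha>) * l k \<omega>)
              * cis (kdot k x)) *s a k)"

text \<open>Mixed norm ||F||_{L^r_omega L^q_t L^p_x} on (0,T) x T^3.\<close>
definition mixed_norm :: "'w measure \<Rightarrow> real \<Rightarrow> real \<Rightarrow> real \<Rightarrow> real
    \<Rightarrow> ('w \<Rightarrow> real \<Rightarrow> real^3 \<Rightarrow> complex^3) \<Rightarrow> ennreal" where
  "mixed_norm M r q p T F =
     epowr (\<integral>\<^sup>+\<omega>. epowr (\<integral>\<^sup>+t\<in>{0<..<T}.
                epowr (\<integral>\<^sup>+x\<in>torus. ennreal (norm (F \<omega> t x) powr p) \<partial>lborel) (q/p)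
              \<partial>lborel) (r/q) \<partial>M) (1/r)"

end

theory Submission
  imports Defs
begin

text \<open>For fixed \<open>(t, x)\<close> the randomised evolution is a sub-Gaussian series in the Fourier modes,
  so by a Khintchine-type bound its \<open>r\<close>-th moment is at most \<open>(C sqrt r) ^ r\<close> times the power
  \<open>r/2\<close> of the energy \<open>\<Sum>\<^sub>k exp (- 2 t |k|\<^bsup>2\<alpha>\<^esup>) |a\<^sub>k|\<^sup>2\<close>; the free evolution itself is reached
  from the partial sums by Fatou's lemma.  Since \<open>p \<le> q \<le> r\<close>, a Minkowski-type exchange of
  integrations lets the expectation be taken innermost.  The torus has finite measure, and
  the time integral of the energy to the power \<open>q/2\<close> is bounded by the \<open>H\<^sup>s\<close> norm: Jensen's
  inequality in \<open>k\<close> reduces it to single modes, whose decay \<open>exp (- q t |k|\<^bsup>2\<alpha>\<^esup>)\<close> integrates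
  to at most \<open>|k|\<^bsup>-2\<alpha>\<^esup>/q\<close> and so absorbs the weight \<open>(1 + |k|\<^sup>2)\<^bsup>-sq/2\<^esup>\<close> when \<open>s \<ge> -2\<alpha>/q\<close>.\<close>

lemma epowr_ennreal: "0 \<le> y \<Longrightarrow> epowr (ennreal y) e = ennreal (y powr e)"
  by (simp add: epowr_def)

lemma epowr_top [simp]: "epowr \<top> e = \<top>"
  by (simp add: epowr_def)

lemma epowr_zero [simp]: "epowr 0 e = 0"
  by (simp add: epowr_def)

lemma epowr_one [simp]: "epowr y 1 = y"
  by (cases y) (auto simp: epowr_def)

lemma epowr_mono:
  assumes "x \<le> y" "e > 0"
  shows "epowr x e \<le> epowr y e"
proof (cases y)
  case (real b)
  with assms obtain a where "x = ennreal a" "a \<ge> 0"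
    by (metis ennreal_cases ennreal_less_top linorder_not_le top.extremum_unique)
  with real assms show ?thesis
    by (auto simp: epowr_def ennreal_le_iff2 intro!: ennreal_leI powr_mono2)
qed simp

lemma epowr_mult:
  assumes "e > 0"
  shows "epowr (x * y) e = epowr x e * epowr y e"
proof (cases x; cases y)
  fix a b assume "x = ennreal a" "0 \<le> a" "y = ennreal b" "0 \<le> b"
  then show ?thesis by (simp add: epowr_ennreal powr_mult flip: ennreal_mult)
next
  fix a assume "x = ennreal a" "0 \<le> a" "y = \<top>"
  with assms show ?thesis by (cases "a = 0") (auto simp: epowr_ennreal ennreal_mult_top)
next
  fix b assume "x = \<top>" "y = ennreal b" "0 \<le> b"
  with assms show ?thesis by (cases "b = 0") (auto simp: epowr_ennreal ennreal_top_mult)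
qed simp

lemma epowr_epowr: "e1 > 0 \<Longrightarrow> epowr (epowr x e1) e2 = epowr x (e1 * e2)"
  by (cases x) (auto simp: epowr_ennreal powr_powr)

lemma epowr_eq_top_iff: "e > 0 \<Longrightarrow> epowr x e = \<top> \<longleftrightarrow> x = \<top>"
  by (cases x) (auto simp: epowr_ennreal)

lemma measurable_epowr [measurable]:
  assumes [measurable]: "f \<in> borel_measurable M"
  shows "(\<lambda>x. epowr (f x) e) \<in> borel_measurable M"
  unfolding epowr_def by measurable

lemma powr_le_tangent:
  fixes Q \<theta> y :: real
  assumes "0 < Q" "Q < 1" "\<theta> > 0" "y \<ge> 0"
  shows "y powr Q \<le> (1 - Q) * \<theta> powr Q + Q * \<theta> powr (Q - 1) * y"
proof (cases "y = 0")
  case False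
  with assms have "y powr Q * \<theta> powr (1 - Q) \<le> Q * y + (1 - Q) * \<theta>"
    using Youngs_inequality_0[of Q "1 - Q" y \<theta>] by simp
  then have "y powr Q * \<theta> powr (1 - Q) * \<theta> powr (Q - 1) \<le> (Q * y + (1 - Q) * \<theta>) * \<theta> powr (Q - 1)"
    by (rule mult_right_mono) simp
  moreover have "\<theta> powr (1 - Q) * \<theta> powr (Q - 1) = 1" "\<theta> * \<theta> powr (Q - 1) = \<theta> powr Q"
    using assms by (simp_all add: powr_add[symmetric] powr_mult_base)
  ultimately show ?thesis
    by (simp add: algebra_simps)
qed (use assms in simp)

text \<open>Substitute \<open>y = j / u powr (1/Q)\<close> into the tangent-line bound and multiply by \<open>u\<close>.\<close>
lemma epowr_le_weighted_tangent:
  fixes Q \<theta> u :: real and J :: ennreal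
  assumes Q: "0 < Q" "Q < 1" and "\<theta> > 0" "u \<ge> 0" and uJ: "u = 0 \<Longrightarrow> J = 0"
  shows "epowr J Q \<le> ennreal ((1 - Q) * \<theta> powr Q) * ennreal u
           + ennreal (Q * \<theta> powr (Q - 1)) * (ennreal (u powr (1 - 1/Q)) * J)"
proof (cases "u = 0")
  case False
  with assms have upos: "u > 0" by simp
  show ?thesis
  proof (cases J)
    case (real j)
    define y where "y = j * u powr (- (1/Q))"
    have y0: "y \<ge> 0" using real by (simp add: y_def)
    have "(u powr (- (1/Q))) powr Q = u powr (- 1)"
      using Q upos by (simp add: powr_powr)
    then have A: "u * y powr Q = j powr Q"
      using real upos by (simp add: y_def powr_mult powr_minus)
    have B: "u * y = u powr (1 - 1/Q) * j"
      using upos powr_add[of u 1 "-1/Q"] by (simp add: y_def)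
    have "u * y powr Q \<le> u * ((1 - Q) * \<theta> powr Q + Q * \<theta> powr (Q - 1) * y)"
      using powr_le_tangent[OF Q \<open>\<theta> > 0\<close> y0] \<open>u \<ge> 0\<close> by (rule mult_left_mono)
    then have "ennreal (j powr Q) \<le> ennreal ((1 - Q) * \<theta> powr Q * u + Q * \<theta> powr (Q - 1) * (u powr (1 - 1/Q) * j))"
      unfolding A B[symmetric] by (intro ennreal_leI) (simp add: algebra_simps)
    also have "\<dots> = ennreal ((1 - Q) * \<theta> powr Q) * ennreal u
        + ennreal (Q * \<theta> powr (Q - 1)) * (ennreal (u powr (1 - 1/Q)) * J)"
      using Q upos real by (simp add: ennreal_mult ennreal_plus)
    finally show ?thesis
      using real by (simp add: epowr_ennreal)
  qed (use upos Q \<open>\<theta> > 0\<close> in \<open>simp add: ennreal_mult_top ennreal_top_mult\<close>)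
qed (use uJ in simp)

text \<open>Hoelder's inequality with exponents \<open>1/Q\<close> and \<open>1/(1 - Q)\<close>, written for
  \<open>J powr Q = (u powr (1 - 1/Q) * J) powr Q * u powr (1 - Q)\<close>; it is proved by integrating
  the tangent bound at \<open>\<theta> = (\<integral> u powr (1 - 1/Q) * J) / U\<close>.\<close>
lemma nn_integral_epowr_le_weighted_Holder:
  fixes u :: "'a \<Rightarrow> real" and J :: "'a \<Rightarrow> ennreal"
  assumes [measurable]: "u \<in> borel_measurable M" "J \<in> borel_measurable M"
    and u0: "\<And>x. 0 \<le> u x" and uJ: "\<And>x. u x = 0 \<Longrightarrow> J x = 0"
    and U: "(\<integral>\<^sup>+x. ennreal (u x) \<partial>M) = ennreal U" "U > 0"
    and Q: "0 < Q" "Q \<le> 1"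
  shows "(\<integral>\<^sup>+x. epowr (J x) Q \<partial>M)
    \<le> ennreal (U powr (1 - Q)) * epowr (\<integral>\<^sup>+x. ennreal (u x powr (1 - 1/Q)) * J x \<partial>M) Q"
    (is "_ \<le> _ * epowr ?G Q")
proof (cases "Q = 1")
  case True
  have "ennreal (u x powr (1 - 1/Q)) * J x = J x" for x
    using True uJ[of x] u0[of x] by (cases "u x = 0") auto
  with True \<open>U > 0\<close> show ?thesis by simp
next
  case False
  with Q have Q1: "Q < 1" by simp
  show ?thesis
  proof (cases ?G)
    case (real g)
    show ?thesis
    proof (cases "g = 0")
      case True
      with real have "AE x in M. ennreal (u x powr (1 - 1/Q)) * J x = 0"
        by (simp add: nn_integral_0_iff_AE)
      then have "AE x in M. epowr (J x) Q = 0"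
        by eventually_elim (use uJ u0 in \<open>force simp: epowr_def\<close>)
      then have "(\<integral>\<^sup>+x. epowr (J x) Q \<partial>M) = 0"
        by (simp add: nn_integral_0_iff_AE)
      then show ?thesis by simp
    next
      case False
      with real have "g > 0" by simp
      define \<theta> where "\<theta> = g / U"
      have "\<theta> > 0" using \<open>g > 0\<close> \<open>U > 0\<close> by (simp add: \<theta>_def)
      have "(\<integral>\<^sup>+x. epowr (J x) Q \<partial>M) \<le> (\<integral>\<^sup>+x. ennreal ((1 - Q) * \<theta> powr Q) * ennreal (u x)
          + ennreal (Q * \<theta> powr (Q - 1)) * (ennreal (u x powr (1 - 1/Q)) * J x) \<partial>M)"
        by (intro nn_integral_mono epowr_le_weighted_tangent[OF Q(1) Q1 \<open>\<theta> > 0\<close> u0 uJ])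
      also have "\<dots> = ennreal ((1 - Q) * \<theta> powr Q) * ennreal U + ennreal (Q * \<theta> powr (Q - 1)) * ennreal g"
        by (simp add: nn_integral_add nn_integral_cmult U real)
      also have "\<dots> = ennreal ((1 - Q) * \<theta> powr Q * U + Q * \<theta> powr (Q - 1) * g)"
        using Q1 Q \<open>U > 0\<close> \<open>g > 0\<close> by (simp add: ennreal_mult ennreal_plus)
      also have "(1 - Q) * \<theta> powr Q * U + Q * \<theta> powr (Q - 1) * g = U powr (1 - Q) * g powr Q"
      proof -
        have "\<theta> powr Q * U = U powr (1 - Q) * g powr Q" "\<theta> powr (Q - 1) * g = U powr (1 - Q) * g powr Q"
          using \<open>U > 0\<close> \<open>g > 0\<close> by (simp_all add: \<theta>_def powr_divide powr_diff field_simps)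
        then show ?thesis by (simp add: algebra_simps)
      qed
      finally show ?thesis
        using real \<open>g > 0\<close> by (simp add: epowr_ennreal ennreal_mult)
    qed
  qed (use \<open>U > 0\<close> Q in \<open>simp add: ennreal_mult_top\<close>)
qed

lemma epowr_nn_integral_le_Jensen:
  fixes b x :: "'a \<Rightarrow> real"
  assumes [measurable]: "b \<in> borel_measurable M" "x \<in> borel_measurable M"
    and "\<And>k. b k \<ge> 0" "\<And>k. x k \<ge> 0"
    and B: "(\<integral>\<^sup>+k. ennreal (b k) \<partial>M) = ennreal B" "B > 0" and "m \<ge> 1"
  shows "epowr (\<integral>\<^sup>+k. ennreal (b k * x k) \<partial>M) m
    \<le> ennreal (B powr (m - 1)) * (\<integral>\<^sup>+k. ennreal (b k * x k powr m) \<partial>M)"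
proof -
  define J where "J k = ennreal ((b k * x k) powr m)" for k
  have [measurable]: "J \<in> borel_measurable M"
    unfolding J_def by measurable
  have "epowr (J k) (1/m) = ennreal (b k * x k)" for k
    using assms by (simp add: J_def epowr_ennreal powr_powr)
  moreover have "ennreal (b k powr (1 - 1/(1/m))) * J k = ennreal (b k * x k powr m)" for k
  proof (cases "b k = 0")
    case False
    with assms have "b k powr (1 - m) * (b k * x k) powr m = b k * x k powr m"
      by (simp add: powr_mult powr_diff field_simps)
    with assms show ?thesis
      by (simp add: J_def ennreal_mult[symmetric])
  qed (use \<open>m \<ge> 1\<close> in \<open>simp add: J_def\<close>)
  ultimately have "(\<integral>\<^sup>+k. ennreal (b k * x k) \<partial>M)
      \<le> ennreal (B powr (1 - 1/m)) * epowr (\<integral>\<^sup>+k. ennreal (b k * x k powr m) \<partial>M) (1/m)"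
    using nn_integral_epowr_le_weighted_Holder[of b M J B "1/m"] assms
    by (simp add: J_def)
  then have "epowr (\<integral>\<^sup>+k. ennreal (b k * x k) \<partial>M) m
      \<le> epowr (ennreal (B powr (1 - 1/m)) * epowr (\<integral>\<^sup>+k. ennreal (b k * x k powr m) \<partial>M) (1/m)) m"
    using \<open>m \<ge> 1\<close> by (intro epowr_mono) auto
  also have "\<dots> = ennreal (B powr (m - 1)) * (\<integral>\<^sup>+k. ennreal (b k * x k powr m) \<partial>M)"
    using assms by (simp add: epowr_mult epowr_epowr epowr_ennreal powr_powr algebra_simps)
  finally show ?thesis .
qed

lemma nn_integral_epowr_le_finite_measure:
  assumes [measurable]: "f \<in> borel_measurable M"
    and V: "emeasure M (space M) = ennreal V" "V > 0" and P: "0 < P" "P \<le> 1"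
  shows "(\<integral>\<^sup>+x. epowr (f x) P \<partial>M) \<le> ennreal (V powr (1 - P)) * epowr (\<integral>\<^sup>+x. f x \<partial>M) P"
  using nn_integral_epowr_le_weighted_Holder[of "\<lambda>_. 1" M f V P] V P by simp

text \<open>Hoelder's inequality in \<open>x\<close>, and in \<open>t\<close> with weight \<open>g powr (q/r)\<close>: after raising to the
  power \<open>r/q\<close>, the mixed norm is dominated by a functional that is linear in \<open>\<Psi>\<close>.\<close>
lemma epowr_mixed_nn_integral_le_weighted:
  fixes N :: "'t measure" and L :: "'x measure" and \<Psi> :: "'t \<Rightarrow> 'x \<Rightarrow> ennreal" and g :: "'t \<Rightarrow> real"
  assumes "sigma_finite_measure L" and \<Psi>_meas: "case_prod \<Psi> \<in> borel_measurable (N \<Otimes>\<^sub>M L)"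
    and [measurable]: "g \<in> borel_measurable N" and g_pos: "\<And>t. g t > 0"
    and V: "emeasure L (space L) = ennreal V" "V > 0"
    and u0: "(\<integral>\<^sup>+t. ennreal (g t powr (q/r)) \<partial>N) = ennreal u0" "u0 > 0"
    and pqr: "0 < p" "p \<le> q" "q \<le> r"
  shows "epowr (\<integral>\<^sup>+t. epowr (\<integral>\<^sup>+x. epowr (\<Psi> t x) (p/r) \<partial>L) (q/p) \<partial>N) (r/q)
    \<le> ennreal (V powr (r/p - 1) * u0 powr (r/q - 1)) * (\<integral>\<^sup>+t. ennreal (g t powr (q/r - 1)) * (\<integral>\<^sup>+x. \<Psi> t x \<partial>L) \<partial>N)"
proof -
  interpret L: sigma_finite_measure L by fact
  define P where "P = p / r"
  define Q where "Q = q / r"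
  have P: "0 < P" "P \<le> 1" and Q: "0 < Q" "Q \<le> 1"
    using pqr by (auto simp: P_def Q_def)
  define J where "J t = (\<integral>\<^sup>+x. \<Psi> t x \<partial>L)" for t
  have [measurable]: "J \<in> borel_measurable N"
    unfolding J_def using \<Psi>_meas by measurable
  have "epowr (\<integral>\<^sup>+x. epowr (\<Psi> t x) P \<partial>L) (q/p) \<le> ennreal (V powr ((1 - P) * (q/p))) * epowr (J t) Q"
    if "t \<in> space N" for t
  proof -
    have "\<Psi> t \<in> borel_measurable L"
      using measurable_Pair2[OF \<Psi>_meas that] by simp
    then have "epowr (\<integral>\<^sup>+x. epowr (\<Psi> t x) P \<partial>L) (q/p) \<le> epowr (ennreal (V powr (1 - P)) * epowr (J t) P) (q/p)"
      unfolding J_def using pqr by (intro epowr_mono nn_integral_epowr_le_finite_measure V P) auto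
    also have "\<dots> = ennreal (V powr ((1 - P) * (q/p))) * epowr (J t) Q"
      using pqr P V by (simp add: epowr_mult epowr_epowr epowr_ennreal powr_powr P_def Q_def)
    finally show ?thesis .
  qed
  then have "(\<integral>\<^sup>+t. epowr (\<integral>\<^sup>+x. epowr (\<Psi> t x) P \<partial>L) (q/p) \<partial>N)
      \<le> ennreal (V powr ((1 - P) * (q/p))) * (\<integral>\<^sup>+t. epowr (J t) Q \<partial>N)"
    by (subst nn_integral_cmult[symmetric]) (auto intro!: nn_integral_mono)
  also have "\<dots> \<le> ennreal (V powr ((1 - P) * (q/p))) *
      (ennreal (u0 powr (1 - Q)) * epowr (\<integral>\<^sup>+t. ennreal ((g t powr Q) powr (1 - 1/Q)) * J t \<partial>N) Q)"
    using g_pos u0 Q unfolding Q_def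
    by (intro mult_left_mono nn_integral_epowr_le_weighted_Holder)
       (auto simp: less_imp_le g_pos[THEN less_imp_neq, symmetric])
  also have "Q * (1 - 1/Q) = q/r - 1"
    using pqr by (simp add: Q_def field_simps)
  then have "(\<lambda>t. (g t powr Q) powr (1 - 1/Q)) = (\<lambda>t. g t powr (q/r - 1))"
    by (simp add: powr_powr)
  finally have "epowr (\<integral>\<^sup>+t. epowr (\<integral>\<^sup>+x. epowr (\<Psi> t x) P \<partial>L) (q/p) \<partial>N) (r/q)
      \<le> epowr (ennreal (V powr ((1 - P) * (q/p))) *
           (ennreal (u0 powr (1 - Q)) * epowr (\<integral>\<^sup>+t. ennreal (g t powr (q/r - 1)) * J t \<partial>N) Q)) (r/q)"
    using pqr by (intro epowr_mono) auto
  also have "\<dots> = ennreal (V powr (r/p - 1) * u0 powr (r/q - 1)) * (\<integral>\<^sup>+t. ennreal (g t powr (q/r - 1)) * J t \<partial>N)"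
  proof -
    have "(1 - p/r) * r / p = r/p - 1" "(1 - q/r) * r / q = r/q - 1"
      using pqr by (simp_all add: field_simps)
    with pqr V u0 show ?thesis
      by (simp add: P_def Q_def epowr_mult epowr_epowr epowr_ennreal powr_powr ennreal_mult mult.assoc)
  qed
  finally show ?thesis
    by (simp add: P_def J_def)
qed

lemma nn_integral_weighted_moment_le:
  fixes M :: "'w measure" and N :: "'t measure" and L :: "'x measure"
    and \<Phi> :: "'w \<Rightarrow> 't \<Rightarrow> 'x \<Rightarrow> ennreal" and g :: "'t \<Rightarrow> real"
  assumes "sigma_finite_measure M" "sigma_finite_measure N" "sigma_finite_measure L"
    and \<Phi>_meas: "(\<lambda>z. \<Phi> (fst (fst z)) (snd (fst z)) (snd z)) \<in> borel_measurable ((M \<Otimes>\<^sub>M N) \<Otimes>\<^sub>M L)"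
    and [measurable]: "g \<in> borel_measurable N" and g_pos: "\<And>t. g t > 0"
    and V: "emeasure L (space L) = ennreal V"
    and moment: "AE t in N. \<forall>x\<in>space L. (\<integral>\<^sup>+\<omega>. \<Phi> \<omega> t x \<partial>M) \<le> ennreal (g t)"
  shows "(\<integral>\<^sup>+\<omega>. (\<integral>\<^sup>+t. ennreal (g t powr (Q - 1)) * (\<integral>\<^sup>+x. \<Phi> \<omega> t x \<partial>L) \<partial>N) \<partial>M)
    \<le> ennreal V * (\<integral>\<^sup>+t. ennreal (g t powr Q) \<partial>N)"
proof -
  interpret MxN: pair_sigma_finite M N using assms(1,2) by (simp add: pair_sigma_finite_def)
  interpret MxL: pair_sigma_finite M L using assms(1,3) by (simp add: pair_sigma_finite_def)
  note [measurable] = \<Phi>_meas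
  have "(\<integral>\<^sup>+\<omega>. (\<integral>\<^sup>+t. ennreal (g t powr (Q - 1)) * (\<integral>\<^sup>+x. \<Phi> \<omega> t x \<partial>L) \<partial>N) \<partial>M)
      = (\<integral>\<^sup>+t. (\<integral>\<^sup>+\<omega>. ennreal (g t powr (Q - 1)) * (\<integral>\<^sup>+x. \<Phi> \<omega> t x \<partial>L) \<partial>M) \<partial>N)"
    by (intro MxN.Fubini'[symmetric]) (simp add: split_beta')
  also have "\<dots> = (\<integral>\<^sup>+t. ennreal (g t powr (Q - 1)) * (\<integral>\<^sup>+x. (\<integral>\<^sup>+\<omega>. \<Phi> \<omega> t x \<partial>M) \<partial>L) \<partial>N)"
  proof (intro nn_integral_cong)
    fix t assume "t \<in> space N"
    then have "(\<lambda>(\<omega>, x). ((\<omega>, t), x)) \<in> measurable (M \<Otimes>\<^sub>M L) ((M \<Otimes>\<^sub>M N) \<Otimes>\<^sub>M L)"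
      by measurable
    from measurable_compose[OF this \<Phi>_meas]
    have [measurable]: "(\<lambda>(\<omega>, x). \<Phi> \<omega> t x) \<in> borel_measurable (M \<Otimes>\<^sub>M L)"
      by (simp add: split_beta')
    show "(\<integral>\<^sup>+\<omega>. ennreal (g t powr (Q - 1)) * (\<integral>\<^sup>+x. \<Phi> \<omega> t x \<partial>L) \<partial>M)
        = ennreal (g t powr (Q - 1)) * (\<integral>\<^sup>+x. (\<integral>\<^sup>+\<omega>. \<Phi> \<omega> t x \<partial>M) \<partial>L)"
      by (subst nn_integral_cmult) (simp_all add: MxL.Fubini')
  qed
  also have "\<dots> \<le> (\<integral>\<^sup>+t. ennreal V * ennreal (g t powr Q) \<partial>N)"
    using moment
  proof (intro nn_integral_mono_AE, eventually_elim)
    case (elim t)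
    then have "(\<integral>\<^sup>+x. (\<integral>\<^sup>+\<omega>. \<Phi> \<omega> t x \<partial>M) \<partial>L) \<le> ennreal (g t) * ennreal V"
      using nn_integral_mono[of L "\<lambda>x. \<integral>\<^sup>+\<omega>. \<Phi> \<omega> t x \<partial>M" "\<lambda>_. ennreal (g t)"] by (simp add: V)
    then have "ennreal (g t powr (Q - 1)) * (\<integral>\<^sup>+x. (\<integral>\<^sup>+\<omega>. \<Phi> \<omega> t x \<partial>M) \<partial>L)
        \<le> ennreal (g t powr (Q - 1) * g t) * ennreal V"
      using g_pos[of t] by (simp add: mult_left_mono ennreal_mult mult.assoc)
    also have "g t powr (Q - 1) * g t = g t powr Q"
      using g_pos[of t] powr_add[of "g t" "Q - 1" 1] by simp
    finally show ?case by (simp add: mult.commute)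
  qed
  also have "\<dots> = ennreal V * (\<integral>\<^sup>+t. ennreal (g t powr Q) \<partial>N)"
    by (simp add: nn_integral_cmult)
  finally show ?thesis .
qed

lemma nn_integral_mixed_epowr_le:
  fixes M :: "'w measure" and N :: "'t measure" and L :: "'x measure"
    and \<Phi> :: "'w \<Rightarrow> 't \<Rightarrow> 'x \<Rightarrow> ennreal" and g :: "'t \<Rightarrow> real"
  assumes \<sigma>: "sigma_finite_measure M" "sigma_finite_measure N" "sigma_finite_measure L"
    and \<Phi>_meas: "(\<lambda>z. \<Phi> (fst (fst z)) (snd (fst z)) (snd z)) \<in> borel_measurable ((M \<Otimes>\<^sub>M N) \<Otimes>\<^sub>M L)"
    and g_meas: "g \<in> borel_measurable N" and g_pos: "\<And>t. g t > 0"
    and V: "emeasure L (space L) = ennreal V" "V > 0"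
    and U: "(\<integral>\<^sup>+t. ennreal (g t powr (q/r)) \<partial>N) \<le> ennreal U"
    and pqr: "0 < p" "p \<le> q" "q \<le> r"
    and moment: "AE t in N. \<forall>x\<in>space L. (\<integral>\<^sup>+\<omega>. \<Phi> \<omega> t x \<partial>M) \<le> ennreal (g t)"
  shows "(\<integral>\<^sup>+\<omega>. epowr (\<integral>\<^sup>+t. epowr (\<integral>\<^sup>+x. epowr (\<Phi> \<omega> t x) (p/r) \<partial>L) (q/p) \<partial>N) (r/q) \<partial>M)
    \<le> ennreal (V powr (r/p) * U powr (r/q))"
proof (cases "(\<integral>\<^sup>+t. ennreal (g t powr (q/r)) \<partial>N) = 0")
  case True
  with g_meas g_pos have "AE t in N. False"
    by (simp add: nn_integral_0_iff_AE less_le)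
  then have "(\<integral>\<^sup>+t. f t \<partial>N) = (\<integral>\<^sup>+t. 0 \<partial>N)" for f
    by (intro nn_integral_cong_AE) (auto elim: AE_mp)
  then show ?thesis by simp
next
  case False
  with U obtain u0 where u0: "(\<integral>\<^sup>+t. ennreal (g t powr (q/r)) \<partial>N) = ennreal u0" "0 < u0" "u0 \<le> U"
    by (cases "\<integral>\<^sup>+t. ennreal (g t powr (q/r)) \<partial>N") (auto simp: ennreal_le_iff2 top_unique)
  interpret MxN: pair_sigma_finite M N using \<sigma>(1,2) by (simp add: pair_sigma_finite_def)
  define c where "c = V powr (r/p - 1) * u0 powr (r/q - 1)"
  have "(\<integral>\<^sup>+\<omega>. epowr (\<integral>\<^sup>+t. epowr (\<integral>\<^sup>+x. epowr (\<Phi> \<omega> t x) (p/r) \<partial>L) (q/p) \<partial>N) (r/q) \<partial>M)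
      \<le> (\<integral>\<^sup>+\<omega>. ennreal c * (\<integral>\<^sup>+t. ennreal (g t powr (q/r - 1)) * (\<integral>\<^sup>+x. \<Phi> \<omega> t x \<partial>L) \<partial>N) \<partial>M)"
  proof (intro nn_integral_mono)
    fix \<omega> assume "\<omega> \<in> space M"
    then have "(\<lambda>(t, x). ((\<omega>, t), x)) \<in> measurable (N \<Otimes>\<^sub>M L) ((M \<Otimes>\<^sub>M N) \<Otimes>\<^sub>M L)"
      by measurable
    from measurable_compose[OF this \<Phi>_meas]
    have "case_prod (\<Phi> \<omega>) \<in> borel_measurable (N \<Otimes>\<^sub>M L)"
      by (simp add: split_beta')
    then show "epowr (\<integral>\<^sup>+t. epowr (\<integral>\<^sup>+x. epowr (\<Phi> \<omega> t x) (p/r) \<partial>L) (q/p) \<partial>N) (r/q)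
        \<le> ennreal c * (\<integral>\<^sup>+t. ennreal (g t powr (q/r - 1)) * (\<integral>\<^sup>+x. \<Phi> \<omega> t x \<partial>L) \<partial>N)"
      unfolding c_def by (rule epowr_mixed_nn_integral_le_weighted[OF \<sigma>(3) _ g_meas g_pos V u0(1,2) pqr])
  qed
  also have "\<dots> = ennreal c * (\<integral>\<^sup>+\<omega>. (\<integral>\<^sup>+t. ennreal (g t powr (q/r - 1)) * (\<integral>\<^sup>+x. \<Phi> \<omega> t x \<partial>L) \<partial>N) \<partial>M)"
  proof (intro nn_integral_cmult)
    interpret L: sigma_finite_measure L by fact
    note [measurable] = \<Phi>_meas g_meas
    show "(\<lambda>\<omega>. \<integral>\<^sup>+t. ennreal (g t powr (q/r - 1)) * (\<integral>\<^sup>+x. \<Phi> \<omega> t x \<partial>L) \<partial>N) \<in> borel_measurable M"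
      by measurable
  qed
  also have "\<dots> \<le> ennreal c * (ennreal V * ennreal u0)"
    using nn_integral_weighted_moment_le[OF \<sigma> \<Phi>_meas g_meas g_pos V(1) moment, of "q/r"] u0
    by (intro mult_left_mono) auto
  also have "\<dots> = ennreal (V powr (r/p) * u0 powr (r/q))"
    using V u0 powr_add[of V "r/p - 1" 1] powr_add[of u0 "r/q - 1" 1]
    by (simp add: c_def ennreal_mult mult_ac)
  also have "\<dots> \<le> ennreal (V powr (r/p) * U powr (r/q))"
    using u0 pqr V by (intro ennreal_leI mult_left_mono powr_mono2) auto
  finally show ?thesis .
qed

lemma powr_le_exp_scaled:
  fixes x g r :: real
  assumes "x \<ge> 0" "g > 0" "r > 0"
  shows "x powr r \<le> (r / g) powr r * exp (- r) * exp (g * x)"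
proof -
  define y where "y = g * x / r"
  have y0: "y \<ge> 0" using assms by (simp add: y_def)
  have "y \<le> exp (y - 1)" using exp_ge_add_one_self[of "y - 1"] by simp
  then have "y powr r \<le> exp (y - 1) powr r" using y0 assms by (intro powr_mono2) auto
  also have "exp (y - 1) powr r = exp (- r) * exp (g * x)"
    using assms by (simp add: powr_def y_def exp_add[symmetric] algebra_simps)
  finally have "y powr r \<le> exp (- r) * exp (g * x)" .
  moreover have "x powr r = (r / g) powr r * y powr r"
    using assms y0 powr_mult[of "r / g" y r] by (simp add: y_def)
  ultimately show ?thesis
    using assms by (simp add: mult_left_mono mult.assoc)
qed

lemma exp_sum_abs_le_sum_exp:
  fixes Y :: "'b \<Rightarrow> real" and g :: real
  assumes "finite B" "B \<noteq> {}" "g \<ge> 0"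
  shows "exp (g * (\<Sum>b\<in>B. \<bar>Y b\<bar>)) \<le> (\<Sum>b\<in>B. exp (card B * g * Y b) + exp (- card B * g * Y b))"
proof -
  obtain b0 where b0: "b0 \<in> B" "\<And>b. b \<in> B \<Longrightarrow> \<bar>Y b\<bar> \<le> \<bar>Y b0\<bar>"
    using Max_in[of "(\<lambda>b. \<bar>Y b\<bar>) ` B"] Max_ge[of "(\<lambda>b. \<bar>Y b\<bar>) ` B"] assms by fastforce
  have "(\<Sum>b\<in>B. \<bar>Y b\<bar>) \<le> card B * \<bar>Y b0\<bar>"
    using sum_bounded_above[of B "\<lambda>b. \<bar>Y b\<bar>" "\<bar>Y b0\<bar>"] b0 by simp
  then have "exp (g * (\<Sum>b\<in>B. \<bar>Y b\<bar>)) \<le> exp (card B * g * \<bar>Y b0\<bar>)"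
    using assms by (simp add: mult_left_mono mult_ac)
  also have "\<dots> \<le> exp (card B * g * Y b0) + exp (- card B * g * Y b0)"
    by (cases "Y b0 \<ge> 0") (simp_all add: add_increasing add_increasing2)
  also have "\<dots> \<le> (\<Sum>b\<in>B. exp (card B * g * Y b) + exp (- card B * g * Y b))"
    using assms b0 by (intro member_le_sum) (auto intro: add_nonneg_nonneg)
  finally show ?thesis .
qed

lemma norm_powr_le_sum_exp_inner:
  fixes V :: "'b::euclidean_space" and g r :: real
  assumes "g > 0" "r > 0"
  shows "norm V powr r \<le> (r / g) powr r * exp (- r)
    * (\<Sum>b\<in>Basis. exp (DIM('b) * g * (V \<bullet> b)) + exp (- DIM('b) * g * (V \<bullet> b)))"
proof -
  have "norm V powr r \<le> (r / g) powr r * exp (- r) * exp (g * norm V)"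
    using powr_le_exp_scaled[of "norm V" g r] assms by simp
  also have "exp (g * norm V) \<le> exp (g * (\<Sum>b\<in>Basis. \<bar>V \<bullet> b\<bar>))"
    using norm_le_l1[of V] assms by simp
  also have "\<dots> \<le> (\<Sum>b\<in>Basis. exp (DIM('b) * g * (V \<bullet> b)) + exp (- DIM('b) * g * (V \<bullet> b)))"
    using exp_sum_abs_le_sum_exp[of Basis g "\<lambda>b. V \<bullet> b"] assms by simp
  finally show ?thesis
    by (simp add: mult_left_mono)
qed

lemma subgaussian_constant_le:
  fixes r s2 D c :: real
  assumes "s2 > 0" "r \<ge> 1" "D \<ge> 1"
  shows "(r / (sqrt r / sqrt s2)) powr r * exp (- r) * (2 * D) * exp (c * D\<^sup>2 * r)
    \<le> (2 * D * exp (c * D\<^sup>2) * sqrt r) powr r * s2 powr (r/2)"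
proof -
  have "r / (sqrt r / sqrt s2) = sqrt r * sqrt s2"
    using assms by (simp add: field_simps real_sqrt_mult_self)
  moreover have "sqrt s2 powr r = s2 powr (r/2)"
    using assms by (simp add: powr_half_sqrt[symmetric] powr_powr)
  ultimately have "(r / (sqrt r / sqrt s2)) powr r * exp (- r) * (2 * D) * exp (c * D\<^sup>2 * r)
      = (sqrt r powr r * s2 powr (r/2) * exp (c * D\<^sup>2 * r)) * (exp (- r) * (2 * D))"
    by (simp add: powr_mult mult_ac)
  also have "\<dots> \<le> (sqrt r powr r * s2 powr (r/2) * exp (c * D\<^sup>2 * r)) * (2 * D) powr r"
  proof (rule mult_left_mono)
    have "exp (- r) * (2 * D) \<le> (2 * D) powr 1"
      using assms by simp
    also have "\<dots> \<le> (2 * D) powr r"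
      using assms by (intro powr_mono) auto
    finally show "exp (- r) * (2 * D) \<le> (2 * D) powr r" .
  qed simp
  also have "\<dots> = (2 * D * exp (c * D\<^sup>2) * sqrt r) powr r * s2 powr (r/2)"
    by (simp add: powr_mult exp_powr_real mult_ac)
  finally show ?thesis .
qed

context prob_space
begin

lemma subgaussian_mgf_sum:
  fixes l :: "'i \<Rightarrow> 'a \<Rightarrow> real"
  assumes ind: "indep_vars (\<lambda>_. borel) l K" and "finite K"
    and mgf: "\<And>k \<gamma>. k \<in> K \<Longrightarrow> (\<integral>\<^sup>+\<omega>. ennreal (exp (\<gamma> * l k \<omega>)) \<partial>M) \<le> ennreal (exp (c * \<gamma>\<^sup>2))"
  shows "(\<integral>\<^sup>+\<omega>. ennreal (exp (\<gamma> * (\<Sum>k\<in>K. \<beta> k * l k \<omega>))) \<partial>M) \<le> ennreal (exp (c * \<gamma>\<^sup>2 * (\<Sum>k\<in>K. (\<beta> k)\<^sup>2)))"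
proof -
  have "indep_vars (\<lambda>_. borel) (\<lambda>k \<omega>. ennreal (exp (\<gamma> * \<beta> k * l k \<omega>))) K"
    by (rule indep_vars_compose2[OF ind]) auto
  then have "(\<integral>\<^sup>+\<omega>. (\<Prod>k\<in>K. ennreal (exp (\<gamma> * \<beta> k * l k \<omega>))) \<partial>M) = (\<Prod>k\<in>K. \<integral>\<^sup>+\<omega>. ennreal (exp (\<gamma> * \<beta> k * l k \<omega>)) \<partial>M)"
    using \<open>finite K\<close> by (intro indep_vars_nn_integral) auto
  also have "\<dots> \<le> (\<Prod>k\<in>K. ennreal (exp (c * (\<gamma> * \<beta> k)\<^sup>2)))"
  proof (rule prod_mono_ennreal)
    fix k assume "k \<in> K"
    show "(\<integral>\<^sup>+\<omega>. ennreal (exp (\<gamma> * \<beta> k * l k \<omega>)) \<partial>M) \<le> ennreal (exp (c * (\<gamma> * \<beta> k)\<^sup>2))"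
      using mgf[OF \<open>k \<in> K\<close>, of "\<gamma> * \<beta> k"] by simp
  qed
  finally show ?thesis
    using \<open>finite K\<close> by (simp add: prod_ennreal exp_sum[symmetric] sum_distrib_left
        power_mult_distrib mult_ac)
qed

lemma subgaussian_mgf_inner_le:
  fixes l :: "'i \<Rightarrow> 'a \<Rightarrow> real" and v :: "'i \<Rightarrow> 'b::euclidean_space" and c h :: real
  assumes ind: "indep_vars (\<lambda>_. borel) l K" and "finite K"
    and mgf: "\<And>k \<gamma>. k \<in> K \<Longrightarrow> (\<integral>\<^sup>+\<omega>. ennreal (exp (\<gamma> * l k \<omega>)) \<partial>M) \<le> ennreal (exp (c * \<gamma>\<^sup>2))"
    and "c \<ge> 0" "b \<in> Basis"
  shows "(\<integral>\<^sup>+\<omega>. ennreal (exp (h * (\<Sum>k\<in>K. (v k \<bullet> b) * l k \<omega>))) \<partial>M)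
    \<le> ennreal (exp (c * h\<^sup>2 * (\<Sum>k\<in>K. (norm (v k))\<^sup>2)))"
proof -
  have "(\<integral>\<^sup>+\<omega>. ennreal (exp (h * (\<Sum>k\<in>K. (v k \<bullet> b) * l k \<omega>))) \<partial>M)
      \<le> ennreal (exp (c * h\<^sup>2 * (\<Sum>k\<in>K. (v k \<bullet> b)\<^sup>2)))"
    by (rule subgaussian_mgf_sum[OF ind \<open>finite K\<close> mgf])
  also have "\<dots> \<le> ennreal (exp (c * h\<^sup>2 * (\<Sum>k\<in>K. (norm (v k))\<^sup>2)))"
    using assms by (intro ennreal_leI exp_mono mult_left_mono sum_mono)
      (auto simp: abs_le_square_iff[symmetric] Basis_le_norm)
  finally show ?thesis .
qed

text \<open>The moment is dominated by an exponential moment of \<open>sqrt r / \<sigma>\<close> times the norm,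
  and the norm by the \<open>\<ell>\<^sup>1\<close> norm of the coordinates in the basis, each of which is a
  one-dimensional sub-Gaussian sum.\<close>
lemma subgaussian_moment_sum:
  fixes l :: "'i \<Rightarrow> 'a \<Rightarrow> real" and v :: "'i \<Rightarrow> 'b::euclidean_space" and c r :: real
  assumes ind: "indep_vars (\<lambda>_. borel) l K" and "finite K"
    and mgf: "\<And>k \<gamma>. k \<in> K \<Longrightarrow> (\<integral>\<^sup>+\<omega>. ennreal (exp (\<gamma> * l k \<omega>)) \<partial>M) \<le> ennreal (exp (c * \<gamma>\<^sup>2))"
    and "c \<ge> 0" "r \<ge> 1"
  shows "(\<integral>\<^sup>+\<omega>. ennreal (norm (\<Sum>k\<in>K. l k \<omega> *\<^sub>R v k) powr r) \<partial>M)
    \<le> ennreal ((2 * DIM('b) * exp (c * DIM('b)\<^sup>2) * sqrt r) powr r * (\<Sum>k\<in>K. (norm (v k))\<^sup>2) powr (r/2))"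
proof -
  define s2 where "s2 = (\<Sum>k\<in>K. (norm (v k))\<^sup>2)"
  define D :: real where "D = DIM('b)"
  have "D \<ge> 1" by (simp add: D_def DIM_positive Suc_le_eq)
  show ?thesis
  proof (cases "s2 = 0")
    case True
    with \<open>finite K\<close> have "\<forall>k\<in>K. v k = 0"
      by (simp add: s2_def sum_nonneg_eq_0_iff)
    then show ?thesis by simp
  next
    case False
    then have "s2 > 0" by (simp add: s2_def less_le sum_nonneg)
    define g where "g = sqrt r / sqrt s2"
    have "g > 0" using \<open>s2 > 0\<close> \<open>r \<ge> 1\<close> by (simp add: g_def)
    define A where "A = (r / g) powr r * exp (- r)"
    define Y where "Y b \<omega> = (\<Sum>k\<in>K. (v k \<bullet> b) * l k \<omega>)" for b \<omega>
    have [measurable]: "l k \<in> borel_measurable M" if "k \<in> K" for k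
      using ind that by (simp add: indep_vars_def)
    have pointwise: "ennreal (norm (\<Sum>k\<in>K. l k \<omega> *\<^sub>R v k) powr r)
        \<le> ennreal A * (\<Sum>b\<in>Basis. ennreal (exp (D * g * Y b \<omega>)) + ennreal (exp (- D * g * Y b \<omega>)))" for \<omega>
    proof -
      have "norm (\<Sum>k\<in>K. l k \<omega> *\<^sub>R v k) powr r \<le> A * (\<Sum>b\<in>Basis. exp (D * g * Y b \<omega>) + exp (- D * g * Y b \<omega>))"
        using norm_powr_le_sum_exp_inner[OF \<open>g > 0\<close>, of r "\<Sum>k\<in>K. l k \<omega> *\<^sub>R v k"] \<open>r \<ge> 1\<close>
        by (simp add: A_def D_def Y_def inner_sum_left mult_ac)
      moreover have "A \<ge> 0" by (simp add: A_def)
      then have "ennreal (A * (\<Sum>b\<in>Basis. exp (D * g * Y b \<omega>) + exp (- D * g * Y b \<omega>)))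
          = ennreal A * (\<Sum>b\<in>Basis. ennreal (exp (D * g * Y b \<omega>)) + ennreal (exp (- D * g * Y b \<omega>)))"
        by (simp add: ennreal_mult sum_nonneg add_nonneg_nonneg flip: ennreal_plus sum_ennreal)
      ultimately show ?thesis
        by (metis ennreal_leI)
    qed
    have "(\<integral>\<^sup>+\<omega>. ennreal (norm (\<Sum>k\<in>K. l k \<omega> *\<^sub>R v k) powr r) \<partial>M)
        \<le> (\<integral>\<^sup>+\<omega>. ennreal A * (\<Sum>b\<in>Basis. ennreal (exp (D * g * Y b \<omega>)) + ennreal (exp (- D * g * Y b \<omega>))) \<partial>M)"
      by (intro nn_integral_mono pointwise)
    also have "\<dots> = ennreal A * (\<Sum>b\<in>Basis. (\<integral>\<^sup>+\<omega>. ennreal (exp (D * g * Y b \<omega>)) \<partial>M)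
          + (\<integral>\<^sup>+\<omega>. ennreal (exp (- D * g * Y b \<omega>)) \<partial>M))"
      unfolding Y_def by (simp add: nn_integral_cmult nn_integral_sum nn_integral_add)
    also have "\<dots> \<le> ennreal A * (\<Sum>b\<in>(Basis::'b set). ennreal (exp (c * D\<^sup>2 * r)) + ennreal (exp (c * D\<^sup>2 * r)))"
    proof (intro mult_left_mono sum_mono add_mono)
      fix b :: 'b assume "b \<in> Basis"
      have coordinate: "(\<integral>\<^sup>+\<omega>. ennreal (exp (h * Y b \<omega>)) \<partial>M) \<le> ennreal (exp (c * h\<^sup>2 * s2))" for h
        unfolding Y_def s2_def by (rule subgaussian_mgf_inner_le[OF ind \<open>finite K\<close> mgf \<open>c \<ge> 0\<close> \<open>b \<in> Basis\<close>])
      have exponents: "c * (D * g)\<^sup>2 * s2 = c * D\<^sup>2 * r" "c * (- D * g)\<^sup>2 * s2 = c * D\<^sup>2 * r"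
        using \<open>s2 > 0\<close> \<open>r \<ge> 1\<close> by (simp_all add: g_def power_mult_distrib power_divide)
      show "(\<integral>\<^sup>+\<omega>. ennreal (exp (D * g * Y b \<omega>)) \<partial>M) \<le> ennreal (exp (c * D\<^sup>2 * r))"
        using coordinate[of "D * g"] by (simp only: exponents)
      show "(\<integral>\<^sup>+\<omega>. ennreal (exp (- D * g * Y b \<omega>)) \<partial>M) \<le> ennreal (exp (c * D\<^sup>2 * r))"
        using coordinate[of "- D * g"] by (simp only: exponents)
    qed simp
    also have "\<dots> = ennreal (A * (2 * D) * exp (c * D\<^sup>2 * r))"
      by (simp add: D_def A_def ennreal_mult ennreal_of_nat_eq_real_of_nat mult_ac flip: ennreal_plus)
    also have "\<dots> \<le> ennreal ((2 * D * exp (c * D\<^sup>2) * sqrt r) powr r * s2 powr (r/2))"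
      using subgaussian_constant_le[OF \<open>s2 > 0\<close> \<open>r \<ge> 1\<close> \<open>D \<ge> 1\<close>, of c]
      by (simp add: A_def g_def ennreal_leI)
    finally show ?thesis
      by (simp add: s2_def D_def)
  qed
qed

end

lemma knorm2_nonneg: "knorm2 k \<ge> 0"
  unfolding knorm2_def by (intro sum_nonneg) auto

lemma knorm2_ge_1:
  assumes "k \<noteq> 0"
  shows "knorm2 k \<ge> 1"
proof -
  obtain i where "k $ i \<noteq> 0"
    using assms by (metis vec_eq_iff zero_index)
  then have "1 \<le> \<bar>real_of_int (k $ i)\<bar>"
    by linarith
  then have "1 \<le> (real_of_int (k $ i))\<^sup>2"
    by (metis one_le_power power2_abs)
  also have "\<dots> \<le> knorm2 k"
    unfolding knorm2_def by (rule member_le_sum) auto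
  finally show ?thesis .
qed

lemma nn_integral_exp_decay_le:
  fixes N q T :: real
  assumes "N > 0" "q > 0" "T > 0"
  shows "(\<integral>\<^sup>+t\<in>{0<..<T}. ennreal (N * exp (- q * t * N)) \<partial>lborel) \<le> ennreal (1 / q)"
proof -
  define F where "F t = - exp (- q * t * N) / q" for t
  have FTC: "((\<lambda>t. N * exp (- q * t * N)) has_integral (F T - F 0)) {0..T}"
  proof (rule fundamental_theorem_of_calculus)
    fix t assume "t \<in> {0..T}"
    show "(F has_vector_derivative N * exp (- q * t * N)) (at t within {0..T})"
      unfolding F_def has_real_derivative_iff_has_vector_derivative[symmetric]
      using \<open>q > 0\<close> by (auto intro!: derivative_eq_intros simp: field_simps)
  qed (use \<open>T > 0\<close> in simp)
  have "(\<integral>\<^sup>+t. ennreal (N * exp (- q * t * N)) * indicator {0..T} t \<partial>lborel) = ennreal (F T - F 0)"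
    by (rule nn_integral_has_integral_lebesgue'[OF _ FTC]) (use \<open>N > 0\<close> in simp)
  moreover have "F T - F 0 \<le> 1 / q"
    using \<open>q > 0\<close> by (simp add: F_def field_simps)
  moreover have "(\<integral>\<^sup>+t\<in>{0<..<T}. ennreal (N * exp (- q * t * N)) \<partial>lborel)
      \<le> (\<integral>\<^sup>+t. ennreal (N * exp (- q * t * N)) * indicator {0..T} t \<partial>lborel)"
    by (intro nn_integral_mono) (auto split: split_indicator)
  ultimately show ?thesis
    by (metis ennreal_leI order_trans)
qed

text \<open>The smoothing of the semigroup pays for the negative Sobolev weight: the high modes
  decay in time at rate \<open>knorm2 k powr \<alpha>\<close>, which dominates the weight as long as
  \<open>- s * q / 2 \<le> \<alpha>\<close>.\<close>
lemma nn_integral_smoothing_weight_le: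
  fixes \<alpha> s q T :: real and k :: "int^3"
  assumes "\<alpha> > 0" "q \<ge> 1" "T > 0" "- s * q / 2 \<le> \<alpha>"
  shows "(\<integral>\<^sup>+t\<in>{0<..<T}. ennreal ((1 + knorm2 k) powr (- s * q / 2) * exp (- q * t * knorm2 k powr \<alpha>)) \<partial>lborel)
    \<le> ennreal (T + 2 powr \<alpha>)"
proof (cases "k = 0")
  case True
  with \<open>T > 0\<close> show ?thesis by (simp add: knorm2_def ennreal_leI)
next
  case False
  define N where "N = knorm2 k powr \<alpha>"
  have "knorm2 k \<ge> 1" using knorm2_ge_1[OF False] .
  then have "N \<ge> 1" using \<open>\<alpha> > 0\<close> by (simp add: N_def ge_one_powr_ge_zero)
  have weight: "(1 + knorm2 k) powr (- s * q / 2) \<le> 2 powr \<alpha> * N"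
  proof -
    have "(1 + knorm2 k) powr (- s * q / 2) \<le> (1 + knorm2 k) powr \<alpha>"
      using \<open>knorm2 k \<ge> 1\<close> assms by (intro powr_mono) auto
    also have "\<dots> \<le> (2 * knorm2 k) powr \<alpha>"
      using \<open>knorm2 k \<ge> 1\<close> \<open>\<alpha> > 0\<close> by (intro powr_mono2) auto
    finally show ?thesis
      using \<open>knorm2 k \<ge> 1\<close> by (simp add: N_def powr_mult)
  qed
  have "(\<integral>\<^sup>+t\<in>{0<..<T}. ennreal ((1 + knorm2 k) powr (- s * q / 2) * exp (- q * t * knorm2 k powr \<alpha>)) \<partial>lborel)
      \<le> (\<integral>\<^sup>+t\<in>{0<..<T}. ennreal (2 powr \<alpha>) * ennreal (N * exp (- q * t * N)) \<partial>lborel)"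
    using weight \<open>N \<ge> 1\<close>
    by (intro nn_integral_mono mult_right_mono)
       (auto simp: N_def ennreal_mult[symmetric] intro!: ennreal_leI mult_right_mono)
  also have "\<dots> = ennreal (2 powr \<alpha>) * (\<integral>\<^sup>+t\<in>{0<..<T}. ennreal (N * exp (- q * t * N)) \<partial>lborel)"
    by (subst nn_integral_cmult[symmetric]) (auto simp: mult.assoc)
  also have "\<dots> \<le> ennreal (2 powr \<alpha>) * ennreal (1 / q)"
    using \<open>N \<ge> 1\<close> assms by (intro mult_left_mono nn_integral_exp_decay_le) auto
  also have "\<dots> \<le> ennreal (T + 2 powr \<alpha>)"
    using assms by (simp add: ennreal_mult[symmetric] divide_le_eq add_increasing ennreal_leI)
  finally show ?thesis .
qed

lemma nn_integral_count_space_infsum: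
  fixes f :: "'a \<Rightarrow> real"
  assumes "\<And>x. f x \<ge> 0" "f summable_on UNIV"
  shows "(\<integral>\<^sup>+x. ennreal (f x) \<partial>count_space UNIV) = ennreal (infsum f UNIV)"
proof -
  have "Infinite_Set_Sum.abs_summable_on f UNIV"
    using assms summable_on_iff_abs_summable_on_real abs_summable_equivalent by blast
  then show ?thesis
    using nn_integral_conv_infsetsum infsetsum_infsum assms by metis
qed

text \<open>By Parseval, \<open>evol_energy \<alpha> a t\<close> is the squared \<open>L\<^sup>2\<close> norm of \<open>e\<^bsup>-t(-\<Delta>)\<^sup>\<alpha>\<^esup> f\<close> on the
  torus divided by \<open>(2\<pi>)\<^sup>3\<close>.\<close>
definition evol_energy :: "real \<Rightarrow> (int^3 \<Rightarrow> complex^3) \<Rightarrow> real \<Rightarrow> ennreal" where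
  "evol_energy \<alpha> a t = (\<integral>\<^sup>+k. ennreal (exp (- 2 * t * knorm2 k powr \<alpha>) * (norm (a k))\<^sup>2) \<partial>count_space UNIV)"

lemma measurable_evol_energy [measurable]: "evol_energy \<alpha> a \<in> borel_measurable borel"
proof -
  have "(\<lambda>(k, t). ennreal (exp (- 2 * t * knorm2 k powr \<alpha>) * (norm (a k))\<^sup>2))
      \<in> borel_measurable (count_space UNIV \<Otimes>\<^sub>M borel)"
    by (rule measurable_pair_measure_countable1) auto
  then have "(\<lambda>(t, k). ennreal (exp (- 2 * t * knorm2 k powr \<alpha>) * (norm (a k))\<^sup>2))
      \<in> borel_measurable (borel \<Otimes>\<^sub>M count_space UNIV)"
    by (subst measurable_pair_swap_iff) simp
  then show ?thesis
    unfolding evol_energy_def[abs_def]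
    by (rule sigma_finite_measure.borel_measurable_nn_integral[OF sigma_finite_measure_count_space])
qed

lemma evol_energy_eq_0:
  assumes "\<And>k. a k = 0"
  shows "evol_energy \<alpha> a t = 0"
  using assms by (simp add: evol_energy_def)

lemma Hs_norm_eq_0_imp_zero:
  assumes "in_Hs s a" "Hs_norm s a = 0"
  shows "a k = 0"
proof -
  have "(1 + knorm2 k) powr s * (norm (a k))\<^sup>2 = 0"
    using assms nonneg_infsum_le_0D[of "\<lambda>k. (1 + knorm2 k) powr s * (norm (a k))\<^sup>2" UNIV k]
    by (simp add: in_Hs_def Hs_norm_def infsum_nonneg)
  then show ?thesis
    using knorm2_nonneg[of k] by (simp add: add_nonneg_eq_0_iff)
qed

lemma nn_integral_Hs_weight:
  assumes "in_Hs s a"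
  shows "(\<integral>\<^sup>+k. ennreal ((1 + knorm2 k) powr s * (norm (a k))\<^sup>2) \<partial>count_space UNIV) = ennreal ((Hs_norm s a)\<^sup>2)"
  using assms unfolding in_Hs_def Hs_norm_def
  by (subst nn_integral_count_space_infsum) (auto simp: infsum_nonneg)

lemma epowr_evol_energy_le_Jensen:
  fixes \<alpha> s q t :: real
  assumes "q \<ge> 2" "in_Hs s a" "Hs_norm s a > 0"
  shows "epowr (evol_energy \<alpha> a t) (q/2) \<le> ennreal (Hs_norm s a powr (q - 2)) * (\<integral>\<^sup>+k. ennreal
    ((1 + knorm2 k) powr s * (norm (a k))\<^sup>2 * ((1 + knorm2 k) powr (- s * q / 2) * exp (- q * t * knorm2 k powr \<alpha>)))
    \<partial>count_space UNIV)"
proof -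
  define b where "b k = (1 + knorm2 k) powr s * (norm (a k))\<^sup>2" for k
  define x where "x k = (1 + knorm2 k) powr (- s) * exp (- 2 * t * knorm2 k powr \<alpha>)" for k
  have "evol_energy \<alpha> a t = (\<integral>\<^sup>+k. ennreal (b k * x k) \<partial>count_space UNIV)"
    unfolding evol_energy_def using knorm2_nonneg
    by (intro nn_integral_cong) (simp add: b_def x_def powr_minus field_simps add_nonneg_eq_0_iff)
  also have "epowr \<dots> (q/2) \<le> ennreal (((Hs_norm s a)\<^sup>2) powr (q/2 - 1)) * (\<integral>\<^sup>+k. ennreal (b k * x k powr (q/2)) \<partial>count_space UNIV)"
    using assms nn_integral_Hs_weight[OF assms(2)]
    by (intro epowr_nn_integral_le_Jensen) (auto simp: b_def x_def)
  also have "((Hs_norm s a)\<^sup>2) powr (q/2 - 1) = Hs_norm s a powr (q - 2)"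
  proof -
    have "(Hs_norm s a)\<^sup>2 = Hs_norm s a powr 2"
      using assms by (simp add: powr_numeral)
    then show ?thesis
      by (simp add: powr_powr algebra_simps)
  qed
  finally show ?thesis
    using knorm2_nonneg by (simp add: b_def x_def powr_mult powr_powr exp_powr_real mult_ac)
qed

text \<open>Jensen's inequality in \<open>k\<close> with the Sobolev weights turns the power \<open>q/2\<close> of the energy into
  a sum of single modes, whose time integrals are bounded uniformly in \<open>k\<close>.\<close>
lemma nn_integral_evol_energy_powr_le:
  fixes \<alpha> s q T :: real
  assumes "\<alpha> > 0" "q \<ge> 2" "T > 0" "s \<ge> - 2 * \<alpha> / q" and a: "in_Hs s a"
  shows "(\<integral>\<^sup>+t\<in>{0<..<T}. epowr (evol_energy \<alpha> a t) (q/2) \<partial>lborel)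
    \<le> ennreal ((T + 2 powr \<alpha>) * Hs_norm s a powr q)"
proof (cases "Hs_norm s a = 0")
  case True
  then show ?thesis
    using Hs_norm_eq_0_imp_zero[OF a] by (simp add: evol_energy_eq_0)
next
  case False
  define H where "H = Hs_norm s a"
  have "H > 0" using False by (simp add: H_def Hs_norm_def less_le infsum_nonneg)
  define b where "b k = (1 + knorm2 k) powr s * (norm (a k))\<^sup>2" for k
  define w where "w k t = (1 + knorm2 k) powr (- s * q / 2) * exp (- q * t * knorm2 k powr \<alpha>)" for k t
  have "(\<integral>\<^sup>+t\<in>{0<..<T}. epowr (evol_energy \<alpha> a t) (q/2) \<partial>lborel)
      \<le> (\<integral>\<^sup>+t. (\<integral>\<^sup>+k. ennreal (H powr (q - 2)) * ennreal (b k * w k t) * indicator {0<..<T} t \<partial>count_space UNIV) \<partial>lborel)"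
    using epowr_evol_energy_le_Jensen[OF \<open>q \<ge> 2\<close> a] \<open>H > 0\<close>
    by (intro nn_integral_mono)
       (auto simp: H_def b_def w_def nn_integral_cmult nn_integral_multc split: split_indicator)
  also have "\<dots> = (\<integral>\<^sup>+k. ennreal (H powr (q - 2)) * ennreal (b k) *
      (\<integral>\<^sup>+t\<in>{0<..<T}. ennreal (w k t) \<partial>lborel) \<partial>count_space UNIV)"
    by (subst nn_integral_count_space_nn_integral)
       (auto simp: b_def w_def nn_integral_cmult ennreal_mult mult.assoc intro!: nn_integral_cong)
  also have "\<dots> \<le> (\<integral>\<^sup>+k. ennreal (H powr (q - 2)) * ennreal (b k) * ennreal (T + 2 powr \<alpha>) \<partial>count_space UNIV)"
    unfolding w_def using assms
    by (intro nn_integral_mono mult_left_mono nn_integral_smoothing_weight_le) (auto simp: field_simps)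
  also have "\<dots> = ennreal (H powr (q - 2) * H\<^sup>2 * (T + 2 powr \<alpha>))"
    using \<open>T > 0\<close> nn_integral_Hs_weight[OF a]
    by (simp add: H_def b_def nn_integral_multc nn_integral_cmult ennreal_mult)
  also have "H powr (q - 2) * H\<^sup>2 = H powr q"
    using \<open>H > 0\<close> powr_add[of H "q - 2" 2] by (simp add: powr_power)
  finally show ?thesis
    by (simp add: H_def mult.commute)
qed

lemma finite_to_nat_less: "finite {x :: 'a::countable. to_nat x < n}"
  using finite_vimageI[of "{..<n}" "to_nat :: 'a \<Rightarrow> nat"] by (simp add: vimage_def)

lemma filterlim_to_nat_less_finite_subsets:
  "filterlim (\<lambda>n. {x :: 'a::countable. to_nat x < n}) (finite_subsets_at_top UNIV) sequentially"
  unfolding filterlim_finite_subsets_at_top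
proof (intro allI impI)
  fix X :: "'a set" assume "finite X \<and> X \<subseteq> UNIV"
  then have "\<forall>\<^sub>F n in sequentially. \<forall>x\<in>X. to_nat x < n"
    by (intro eventually_ball_finite ballI eventually_gt_at_top) auto
  then show "\<forall>\<^sub>F n in sequentially. finite {x. to_nat x < n} \<and> X \<subseteq> {x. to_nat x < n} \<and> {x. to_nat x < n} \<subseteq> UNIV"
    by eventually_elim (auto simp: finite_to_nat_less)
qed

definition fourier_mode :: "real \<Rightarrow> (int^3 \<Rightarrow> complex^3) \<Rightarrow> int^3 \<Rightarrow> real \<Rightarrow> real^3 \<Rightarrow> complex^3" where
  "fourier_mode \<alpha> a k t x = (complex_of_real (exp (- t * knorm2 k powr \<alpha>)) * cis (kdot k x)) *s a k"

definition partial_evol :: "real \<Rightarrow> (int^3 \<Rightarrow> 'w \<Rightarrow> real) \<Rightarrow> (int^3 \<Rightarrow> complex^3) \<Rightarrow> nat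
    \<Rightarrow> 'w \<Rightarrow> real \<Rightarrow> real^3 \<Rightarrow> complex^3" where
  "partial_evol \<alpha> l a n \<omega> t x = (\<Sum>k | to_nat k < n. l k \<omega> *\<^sub>R fourier_mode \<alpha> a k t x)"

lemma scaleR_eq_of_real_vector_mult: "y *\<^sub>R v = complex_of_real y *s (v :: complex^'n)"
proof -
  have "(y *\<^sub>R v) $ i = complex_of_real y * v $ i" for i
    by (rule vector_scaleR_component[THEN trans]) (simp only: scaleR_conv_of_real)
  then show ?thesis by (simp add: vec_eq_iff)
qed

lemma free_evol_eq_infsum:
  "free_evol \<alpha> l a \<omega> t x = (\<Sum>\<^sub>\<infinity>k. l k \<omega> *\<^sub>R fourier_mode \<alpha> a k t x)"
  unfolding free_evol_def fourier_mode_def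
  by (simp add: scaleR_eq_of_real_vector_mult vector_smult_assoc mult_ac)

lemma norm_fourier_mode: "norm (fourier_mode \<alpha> a k t x) = exp (- t * knorm2 k powr \<alpha>) * norm (a k)"
  by (simp add: fourier_mode_def norm_vec_def vector_scalar_mult_def norm_mult L2_set_right_distrib)

text \<open>Where the series does not converge, \<open>infsum\<close> returns \<open>0\<close>, so the bound holds trivially there.\<close>
lemma norm_free_evol_powr_le_liminf:
  assumes "r > 0"
  shows "ennreal (norm (free_evol \<alpha> l a \<omega> t x) powr r)
    \<le> liminf (\<lambda>n. ennreal (norm (partial_evol \<alpha> l a n \<omega> t x) powr r))"
proof -
  define f where "f k = l k \<omega> *\<^sub>R fourier_mode \<alpha> a k t x" for k
  show ?thesis
  proof (cases "f summable_on UNIV")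
    case True
    then have "(sum f \<longlongrightarrow> infsum f UNIV) (finite_subsets_at_top UNIV)"
      by (simp add: has_sum_def[symmetric])
    then have "((\<lambda>n. sum f {k. to_nat k < n}) \<longlongrightarrow> infsum f UNIV) sequentially"
      by (rule filterlim_compose[OF _ filterlim_to_nat_less_finite_subsets])
    then have "((\<lambda>n. ennreal (norm (sum f {k. to_nat k < n}) powr r)) \<longlongrightarrow> ennreal (norm (infsum f UNIV) powr r)) sequentially"
      using assms by (intro tendsto_ennrealI tendsto_powr' tendsto_norm) auto
    then have "liminf (\<lambda>n. ennreal (norm (sum f {k. to_nat k < n}) powr r)) = ennreal (norm (infsum f UNIV) powr r)"
      by (intro lim_imp_Liminf) auto
    moreover have "free_evol \<alpha> l a \<omega> t x = infsum f UNIV" "partial_evol \<alpha> l a n \<omega> t x = sum f {k. to_nat k < n}" for n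
      by (simp_all add: free_evol_eq_infsum partial_evol_def f_def[abs_def])
    ultimately show ?thesis by simp
  next
    case False
    then have "free_evol \<alpha> l a \<omega> t x = 0"
      by (simp add: free_evol_eq_infsum f_def[abs_def] infsum_not_exists)
    then show ?thesis
      using assms by simp
  qed
qed

lemma continuous_on_fourier_mode: "continuous_on UNIV (\<lambda>z. fourier_mode \<alpha> a k (fst z) (snd z))"
  unfolding fourier_mode_def vector_scalar_mult_def kdot_def
  by (intro continuous_intros continuous_on_vec_lambda)

lemma measurable_partial_evol:
  assumes [measurable]: "\<And>k. l k \<in> borel_measurable M"
  shows "(\<lambda>z. partial_evol \<alpha> l a n (fst (fst z)) (snd (fst z)) (snd z)) \<in> borel_measurable ((M \<Otimes>\<^sub>M lborel) \<Otimes>\<^sub>M lborel)"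
proof -
  have "(\<lambda>z. (snd (fst z), snd z)) \<in> measurable ((M \<Otimes>\<^sub>M lborel) \<Otimes>\<^sub>M lborel) (borel :: (real \<times> (real^3)) measure)"
    unfolding borel_prod[symmetric] by measurable
  from borel_measurable_continuous_on[OF continuous_on_fourier_mode this]
  have [measurable]: "(\<lambda>z. fourier_mode \<alpha> a k (snd (fst z)) (snd z)) \<in> borel_measurable ((M \<Otimes>\<^sub>M lborel) \<Otimes>\<^sub>M lborel)"
    for k by simp
  show ?thesis
    unfolding partial_evol_def by measurable
qed

lemma (in prob_space) nn_integral_liminf_partial_evol_le:
  fixes c r :: real
  assumes ind: "indep_vars (\<lambda>_. borel) l UNIV"
    and mgf: "\<And>k \<gamma>. (\<integral>\<^sup>+\<omega>. ennreal (exp (\<gamma> * l k \<omega>)) \<partial>M) \<le> ennreal (exp (c * \<gamma>\<^sup>2))"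
    and "c \<ge> 0" "r \<ge> 1"
  shows "(\<integral>\<^sup>+\<omega>. liminf (\<lambda>n. ennreal (norm (partial_evol \<alpha> l a n \<omega> t x) powr r)) \<partial>M)
    \<le> ennreal ((2 * DIM(complex^3) * exp (c * DIM(complex^3)\<^sup>2) * sqrt r) powr r) * epowr (evol_energy \<alpha> a t) (r/2)"
    (is "_ \<le> ennreal ?K * _")
proof -
  have [measurable]: "l k \<in> borel_measurable M" for k
    using ind by (simp add: indep_vars_def)
  have "(\<integral>\<^sup>+\<omega>. liminf (\<lambda>n. ennreal (norm (partial_evol \<alpha> l a n \<omega> t x) powr r)) \<partial>M)
      \<le> liminf (\<lambda>n. \<integral>\<^sup>+\<omega>. ennreal (norm (partial_evol \<alpha> l a n \<omega> t x) powr r) \<partial>M)"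
    by (intro nn_integral_liminf) (simp add: partial_evol_def)
  also have "\<dots> \<le> ennreal ?K * epowr (evol_energy \<alpha> a t) (r/2)"
  proof (intro Liminf_le[OF sequentially_bot] always_eventually allI)
    fix n
    define K where "K = {k :: int^3. to_nat k < n}"
    define s2 where "s2 = (\<Sum>k\<in>K. (norm (fourier_mode \<alpha> a k t x))\<^sup>2)"
    have "ennreal s2 = (\<integral>\<^sup>+k. ennreal (exp (- 2 * t * knorm2 k powr \<alpha>) * (norm (a k))\<^sup>2) * indicator K k \<partial>count_space UNIV)"
      by (simp add: s2_def K_def norm_fourier_mode power_mult_distrib exp_of_nat_mult[symmetric]
          nn_integral_indicator_finite finite_to_nat_less mult.assoc flip: sum_ennreal)
    also have "\<dots> \<le> evol_energy \<alpha> a t"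
      unfolding evol_energy_def by (intro nn_integral_mono) (simp split: split_indicator)
    finally have "ennreal s2 \<le> evol_energy \<alpha> a t" .
    have "(\<integral>\<^sup>+\<omega>. ennreal (norm (partial_evol \<alpha> l a n \<omega> t x) powr r) \<partial>M) \<le> ennreal (?K * s2 powr (r/2))"
      unfolding partial_evol_def K_def[symmetric] s2_def
      using indep_vars_subset[OF ind] finite_to_nat_less mgf \<open>c \<ge> 0\<close> \<open>r \<ge> 1\<close>
      by (intro subgaussian_moment_sum) (auto simp: K_def)
    also have "\<dots> = ennreal ?K * epowr (ennreal s2) (r/2)"
      by (simp add: s2_def sum_nonneg epowr_ennreal ennreal_mult)
    also have "\<dots> \<le> ennreal ?K * epowr (evol_energy \<alpha> a t) (r/2)"
      using \<open>ennreal s2 \<le> evol_energy \<alpha> a t\<close> \<open>r \<ge> 1\<close> by (intro mult_left_mono epowr_mono) auto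
    finally show "(\<integral>\<^sup>+\<omega>. ennreal (norm (partial_evol \<alpha> l a n \<omega> t x) powr r) \<partial>M) \<le> \<dots>" .
  qed
  finally show ?thesis .
qed

lemma torus_eq_cbox: "torus = cbox 0 (\<chi> i. 2 * pi)"
  unfolding torus_def by (auto simp: mem_box_cart)

lemma sets_torus [measurable]: "torus \<in> sets borel"
  unfolding torus_eq_cbox by simp

lemma emeasure_torus: "emeasure lborel torus = ennreal ((2 * pi)^3)"
proof -
  have "emeasure lborel torus = ennreal (measure lborel (cbox (0 :: real^3) (\<chi> i. 2 * pi)))"
    unfolding torus_eq_cbox using emeasure_lborel_cbox_finite
    by (intro emeasure_eq_ennreal_measure) (simp add: less_top)
  also have "measure lborel (cbox (0 :: real^3) (\<chi> i. 2 * pi)) = (2 * pi)^3"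
  proof -
    have "(0 :: real^3) \<in> cbox 0 (\<chi> i. 2 * pi)"
      by (simp add: mem_box_cart)
    then show ?thesis
      by (subst content_cbox_cart) auto
  qed
  finally show ?thesis .
qed

lemma measurable_restrict_space_pair_ident:
  "(\<lambda>z. z) \<in> measurable ((M \<Otimes>\<^sub>M restrict_space N A) \<Otimes>\<^sub>M restrict_space L B) ((M \<Otimes>\<^sub>M N) \<Otimes>\<^sub>M L)"
proof -
  have N: "(\<lambda>x. x) \<in> measurable (restrict_space N A) N" and L: "(\<lambda>x. x) \<in> measurable (restrict_space L B) L"
    by (rule measurable_restrict_space1[OF measurable_ident_sets[OF refl]])+
  show ?thesis
    using measurable_Pair[OF measurable_Pair[OF measurable_compose[OF measurable_fst measurable_fst]
        measurable_compose[OF measurable_compose[OF measurable_fst measurable_snd] N]]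
        measurable_compose[OF measurable_snd L]]
    by simp
qed

lemma mixed_norm_le:
  fixes F :: "'w \<Rightarrow> real \<Rightarrow> real^3 \<Rightarrow> complex^3" and \<Phi> :: "'w \<Rightarrow> real \<Rightarrow> real^3 \<Rightarrow> ennreal"
  assumes F: "\<And>\<omega> t x. ennreal (norm (F \<omega> t x) powr r) \<le> \<Phi> \<omega> t x" and "0 < p" "p \<le> q" "q \<le> r"
  shows "mixed_norm M r q p T F \<le> epowr (\<integral>\<^sup>+\<omega>. epowr (\<integral>\<^sup>+t. epowr (\<integral>\<^sup>+x. epowr (\<Phi> \<omega> t x) (p/r)
    \<partial>restrict_space lborel torus) (q/p) \<partial>restrict_space lborel {0<..<T}) (r/q) \<partial>M) (1/r)"
proof -
  have "ennreal (norm (F \<omega> t x) powr p) \<le> epowr (\<Phi> \<omega> t x) (p/r)" for \<omega> t x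
  proof -
    have "ennreal (norm (F \<omega> t x) powr p) = epowr (ennreal (norm (F \<omega> t x) powr r)) (p/r)"
      using assms by (simp add: epowr_ennreal powr_powr)
    also have "\<dots> \<le> epowr (\<Phi> \<omega> t x) (p/r)"
      using assms by (intro epowr_mono F) auto
    finally show ?thesis .
  qed
  then show ?thesis
    unfolding mixed_norm_def using assms
    by (simp add: nn_integral_restrict_space mult_right_mono nn_integral_mono epowr_mono)
qed

lemma mixed_norm_free_evol_zero: "0 < p \<Longrightarrow> (\<And>k. a k = 0) \<Longrightarrow> mixed_norm M r q p T (free_evol \<alpha> l a) = 0"
  by (simp add: mixed_norm_def free_evol_def)

lemma AE_evol_energy_finite:
  assumes "\<alpha> > 0" "q \<ge> 2" "T > 0" "s \<ge> - 2 * \<alpha> / q" "in_Hs s a"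
  shows "AE t in lborel. t \<in> {0<..<T} \<longrightarrow> evol_energy \<alpha> a t \<noteq> \<top>"
proof -
  have "AE t in lborel. epowr (evol_energy \<alpha> a t) (q/2) * indicator {0<..<T} t \<noteq> \<infinity>"
    by (rule nn_integral_noteq_infinite)
      (use nn_integral_evol_energy_powr_le[OF assms] in \<open>auto simp: top_unique\<close>)
  then show ?thesis
    by eventually_elim (use \<open>q \<ge> 2\<close> in \<open>auto simp: epowr_eq_top_iff\<close>)
qed

text \<open>The added constant keeps the weight positive, as the exchange of integrations requires.\<close>
definition energy_weight :: "real \<Rightarrow> real \<Rightarrow> real \<Rightarrow> (int^3 \<Rightarrow> complex^3) \<Rightarrow> real \<Rightarrow> real" where
  "energy_weight \<alpha> s q a t = enn2real (epowr (evol_energy \<alpha> a t) (q/2)) + Hs_norm s a powr q"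

lemma measurable_energy_weight [measurable]: "energy_weight \<alpha> s q a \<in> borel_measurable borel"
  unfolding energy_weight_def by measurable

lemma nn_integral_energy_weight_le:
  assumes "\<alpha> > 0" "q \<ge> 2" "T > 0" "s \<ge> - 2 * \<alpha> / q" "in_Hs s a"
  shows "(\<integral>\<^sup>+t\<in>{0<..<T}. ennreal (energy_weight \<alpha> s q a t) \<partial>lborel)
    \<le> ennreal ((2 * T + 2 powr \<alpha>) * Hs_norm s a powr q)"
proof -
  have "(\<integral>\<^sup>+t\<in>{0<..<T}. ennreal (energy_weight \<alpha> s q a t) \<partial>lborel)
      \<le> (\<integral>\<^sup>+t. epowr (evol_energy \<alpha> a t) (q/2) * indicator {0<..<T} t
          + ennreal (Hs_norm s a powr q) * indicator {0<..<T} t \<partial>lborel)"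
    unfolding energy_weight_def
    by (intro nn_integral_mono) (auto simp: ennreal_enn2real_if intro: add_right_mono split: split_indicator)
  also have "\<dots> = (\<integral>\<^sup>+t\<in>{0<..<T}. epowr (evol_energy \<alpha> a t) (q/2) \<partial>lborel) + ennreal (Hs_norm s a powr q * T)"
    using \<open>T > 0\<close> by (simp add: nn_integral_add nn_integral_cmult ennreal_mult)
  also have "\<dots> \<le> ennreal ((T + 2 powr \<alpha>) * Hs_norm s a powr q) + ennreal (Hs_norm s a powr q * T)"
    using nn_integral_evol_energy_powr_le[OF assms] by (rule add_right_mono)
  also have "\<dots> = ennreal ((2 * T + 2 powr \<alpha>) * Hs_norm s a powr q)"
    using \<open>T > 0\<close> by (simp add: algebra_simps flip: ennreal_plus)
  finally show ?thesis .
qed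

lemma (in prob_space) AE_moment_le_energy_weight:
  fixes c r :: real
  assumes "\<alpha> > 0" "c \<ge> 0" "T > 0" "2 \<le> q" "q \<le> r" "s \<ge> - 2 * \<alpha> / q" "in_Hs s a"
    and ind: "indep_vars (\<lambda>_. borel) l UNIV"
    and mgf: "\<And>k \<gamma>. (\<integral>\<^sup>+\<omega>. ennreal (exp (\<gamma> * l k \<omega>)) \<partial>M) \<le> ennreal (exp (c * \<gamma>\<^sup>2))"
  shows "AE t in lborel. t \<in> {0<..<T} \<longrightarrow> (\<forall>x.
    (\<integral>\<^sup>+\<omega>. liminf (\<lambda>n. ennreal (norm (partial_evol \<alpha> l a n \<omega> t x) powr r)) \<partial>M)
      \<le> ennreal ((2 * DIM(complex^3) * exp (c * DIM(complex^3)\<^sup>2) * sqrt r) powr r * energy_weight \<alpha> s q a t powr (r/q)))"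
    (is "AE t in lborel. _ \<longrightarrow> (\<forall>x. _ \<le> ennreal (?K * _))")
  using AE_evol_energy_finite[OF \<open>\<alpha> > 0\<close> \<open>2 \<le> q\<close> \<open>T > 0\<close> \<open>s \<ge> - 2 * \<alpha> / q\<close> \<open>in_Hs s a\<close>]
proof eventually_elim
  case (elim t)
  show ?case
  proof (intro impI allI)
    fix x assume "t \<in> {0<..<T}"
    with elim obtain e where e: "evol_energy \<alpha> a t = ennreal e" "e \<ge> 0"
      by (cases "evol_energy \<alpha> a t") auto
    have "e powr (r/2) = (e powr (q/2)) powr (r/q)"
      using \<open>2 \<le> q\<close> by (simp add: powr_powr)
    also have "\<dots> \<le> energy_weight \<alpha> s q a t powr (r/q)"
      using e \<open>2 \<le> q\<close> \<open>q \<le> r\<close> by (intro powr_mono2) (auto simp: energy_weight_def epowr_ennreal)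
    finally have "?K * e powr (r/2) \<le> ?K * energy_weight \<alpha> s q a t powr (r/q)"
      by (rule mult_left_mono) simp
    have "(\<integral>\<^sup>+\<omega>. liminf (\<lambda>n. ennreal (norm (partial_evol \<alpha> l a n \<omega> t x) powr r)) \<partial>M)
        \<le> ennreal ?K * epowr (evol_energy \<alpha> a t) (r/2)"
      using \<open>2 \<le> q\<close> \<open>q \<le> r\<close> \<open>c \<ge> 0\<close> by (intro nn_integral_liminf_partial_evol_le ind mgf) auto
    also have "\<dots> = ennreal (?K * e powr (r/2))"
      using e by (simp add: epowr_ennreal ennreal_mult)
    also have "\<dots> \<le> ennreal (?K * energy_weight \<alpha> s q a t powr (r/q))"
      by (rule ennreal_leI) fact
    finally show "(\<integral>\<^sup>+\<omega>. liminf (\<lambda>n. ennreal (norm (partial_evol \<alpha> l a n \<omega> t x) powr r)) \<partial>M)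
        \<le> ennreal (?K * energy_weight \<alpha> s q a t powr (r/q))" .
  qed
qed

lemma (in prob_space) mixed_norm_free_evol_le_weight:
  fixes g :: "real \<Rightarrow> real"
  assumes l_meas: "\<And>k. l k \<in> borel_measurable M" and "0 < p" "p \<le> q" "q \<le> r"
    and g_meas: "g \<in> borel_measurable borel" and g_pos: "\<And>t. g t > 0"
    and moment: "AE t in lborel. t \<in> {0<..<T} \<longrightarrow> (\<forall>x.
      (\<integral>\<^sup>+\<omega>. liminf (\<lambda>n. ennreal (norm (partial_evol \<alpha> l a n \<omega> t x) powr r)) \<partial>M) \<le> ennreal (g t))"
    and U: "(\<integral>\<^sup>+t\<in>{0<..<T}. ennreal (g t powr (q/r)) \<partial>lborel) \<le> ennreal U"
  shows "mixed_norm M r q p T (free_evol \<alpha> l a) \<le> ennreal (((2 * pi)^3) powr (1/p) * U powr (1/q))"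
proof -
  define N where "N = restrict_space lborel {0<..<T}"
  define L where "L = restrict_space lborel torus"
  define \<Phi> where "\<Phi> \<omega> t x = liminf (\<lambda>n. ennreal (norm (partial_evol \<alpha> l a n \<omega> t x) powr r))" for \<omega> t x
  have "(\<lambda>z. \<Phi> (fst (fst z)) (snd (fst z)) (snd z)) \<in> borel_measurable ((M \<Otimes>\<^sub>M lborel) \<Otimes>\<^sub>M lborel)"
    unfolding \<Phi>_def using measurable_partial_evol[OF l_meas] by measurable
  from measurable_compose[OF measurable_restrict_space_pair_ident this]
  have \<Phi>_meas: "(\<lambda>z. \<Phi> (fst (fst z)) (snd (fst z)) (snd z)) \<in> borel_measurable ((M \<Otimes>\<^sub>M N) \<Otimes>\<^sub>M L)"
    by (simp add: N_def L_def)
  have "(\<integral>\<^sup>+\<omega>. epowr (\<integral>\<^sup>+t. epowr (\<integral>\<^sup>+x. epowr (\<Phi> \<omega> t x) (p/r) \<partial>L) (q/p) \<partial>N) (r/q) \<partial>M)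
      \<le> ennreal (((2 * pi)^3) powr (r/p) * U powr (r/q))"
  proof (rule nn_integral_mixed_epowr_le[OF _ _ _ \<Phi>_meas])
    show "sigma_finite_measure M"
      by (rule prob_space_imp_sigma_finite[OF prob_space_axioms])
    show "sigma_finite_measure N" "sigma_finite_measure L"
      by (auto simp: N_def L_def intro!: sigma_finite_measure_restrict_space sigma_finite_lborel)
    show "emeasure L (space L) = ennreal ((2 * pi)^3)"
      by (simp add: L_def emeasure_restrict_space emeasure_torus)
    show "g \<in> borel_measurable N"
      unfolding N_def using g_meas by (intro measurable_restrict_space1) simp
    show "(\<integral>\<^sup>+t. ennreal (g t powr (q/r)) \<partial>N) \<le> ennreal U"
      using U by (simp add: N_def nn_integral_restrict_space)
    show "AE t in N. \<forall>x\<in>space L. (\<integral>\<^sup>+\<omega>. \<Phi> \<omega> t x \<partial>M) \<le> ennreal (g t)"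
      using moment unfolding N_def L_def \<Phi>_def by (subst AE_restrict_space_iff) auto
  qed (use \<open>0 < p\<close> \<open>p \<le> q\<close> \<open>q \<le> r\<close> g_pos in auto)
  note bound = this
  have "mixed_norm M r q p T (free_evol \<alpha> l a)
      \<le> epowr (\<integral>\<^sup>+\<omega>. epowr (\<integral>\<^sup>+t. epowr (\<integral>\<^sup>+x. epowr (\<Phi> \<omega> t x) (p/r) \<partial>L) (q/p) \<partial>N) (r/q) \<partial>M) (1/r)"
    unfolding N_def L_def \<Phi>_def using \<open>0 < p\<close> \<open>p \<le> q\<close> \<open>q \<le> r\<close>
    by (intro mixed_norm_le norm_free_evol_powr_le_liminf) auto
  also have "\<dots> \<le> epowr (ennreal (((2 * pi)^3) powr (r/p) * U powr (r/q))) (1/r)"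
    using bound \<open>0 < p\<close> \<open>p \<le> q\<close> \<open>q \<le> r\<close> by (intro epowr_mono) auto
  also have "\<dots> = ennreal (((2 * pi)^3) powr (1/p) * U powr (1/q))"
    using \<open>0 < p\<close> \<open>p \<le> q\<close> \<open>q \<le> r\<close> by (simp add: epowr_ennreal powr_mult powr_powr)
  finally show ?thesis .
qed

lemma (in prob_space) mixed_norm_free_evol_le:
  fixes \<alpha> s p q T c r :: real
  assumes "\<alpha> > 0" "c \<ge> 0" "T > 0" "0 < p" "p \<le> q" "2 \<le> q" "q \<le> r" "s \<ge> - 2 * \<alpha> / q"
    and ind: "indep_vars (\<lambda>_. borel) l UNIV"
    and mgf: "\<And>k \<gamma>. (\<integral>\<^sup>+\<omega>. ennreal (exp (\<gamma> * l k \<omega>)) \<partial>M) \<le> ennreal (exp (c * \<gamma>\<^sup>2))"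
    and a: "in_Hs s a"
  shows "mixed_norm M r q p T (free_evol \<alpha> l a) \<le> ennreal (((2 * pi)^3) powr (1/p) * (2 * T + 2 powr \<alpha>) powr (1/q)
    * (2 * DIM(complex^3) * exp (c * DIM(complex^3)\<^sup>2)) * sqrt r * Hs_norm s a)"
proof (cases "Hs_norm s a = 0")
  case True
  then show ?thesis
    using Hs_norm_eq_0_imp_zero[OF a] \<open>0 < p\<close> by (simp add: mixed_norm_free_evol_zero)
next
  case False
  define H where "H = Hs_norm s a"
  have "H > 0" using False by (simp add: H_def Hs_norm_def less_le infsum_nonneg)
  define K :: real where "K = 2 * DIM(complex^3) * exp (c * DIM(complex^3)\<^sup>2)"
  have "K > 0" by (simp add: K_def)
  have w_pos: "energy_weight \<alpha> s q a t > 0" for t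
    using \<open>H > 0\<close> by (simp add: energy_weight_def H_def add_nonneg_pos)
  define g where "g t = (K * sqrt r) powr r * energy_weight \<alpha> s q a t powr (r/q)" for t
  have g_powr: "g t powr (q/r) = (K * sqrt r) powr q * energy_weight \<alpha> s q a t" for t
    using w_pos[of t] \<open>K > 0\<close> \<open>2 \<le> q\<close> \<open>q \<le> r\<close> by (simp add: g_def powr_mult powr_powr)
  have "(\<integral>\<^sup>+t\<in>{0<..<T}. ennreal (g t powr (q/r)) \<partial>lborel)
      = (\<integral>\<^sup>+t. ennreal ((K * sqrt r) powr q) * (ennreal (energy_weight \<alpha> s q a t) * indicator {0<..<T} t) \<partial>lborel)"
    using w_pos by (simp add: g_powr ennreal_mult less_imp_le mult.assoc)
  also have "\<dots> = ennreal ((K * sqrt r) powr q) * (\<integral>\<^sup>+t\<in>{0<..<T}. ennreal (energy_weight \<alpha> s q a t) \<partial>lborel)"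
    by (rule nn_integral_cmult) measurable
  also have "\<dots> \<le> ennreal ((K * sqrt r) powr q) * ennreal ((2 * T + 2 powr \<alpha>) * H powr q)"
    unfolding H_def using assms by (intro mult_left_mono nn_integral_energy_weight_le) auto
  also have "\<dots> = ennreal ((K * sqrt r) powr q * ((2 * T + 2 powr \<alpha>) * H powr q))"
    using \<open>T > 0\<close> by (simp add: ennreal_mult)
  finally have U: "(\<integral>\<^sup>+t\<in>{0<..<T}. ennreal (g t powr (q/r)) \<partial>lborel)
      \<le> ennreal ((K * sqrt r) powr q * ((2 * T + 2 powr \<alpha>) * H powr q))" .
  have "l k \<in> borel_measurable M" for k
    using ind by (simp add: indep_vars_def)
  moreover have "g \<in> borel_measurable borel"
    unfolding g_def by measurable
  moreover have "g t > 0" for t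
    using w_pos[of t] \<open>K > 0\<close> \<open>2 \<le> q\<close> \<open>q \<le> r\<close> by (simp add: g_def)
  moreover note AE_moment_le_energy_weight[OF assms(1-3,6-8) a ind mgf]
  ultimately have "mixed_norm M r q p T (free_evol \<alpha> l a)
      \<le> ennreal (((2 * pi)^3) powr (1/p) * ((K * sqrt r) powr q * ((2 * T + 2 powr \<alpha>) * H powr q)) powr (1/q))"
    using U \<open>0 < p\<close> \<open>p \<le> q\<close> \<open>q \<le> r\<close>
    by (intro mixed_norm_free_evol_le_weight[where g = g]) (auto simp: g_def K_def)
  also have "((K * sqrt r) powr q * ((2 * T + 2 powr \<alpha>) * H powr q)) powr (1/q) = K * sqrt r * (2 * T + 2 powr \<alpha>) powr (1/q) * H"
    using \<open>K > 0\<close> \<open>H > 0\<close> \<open>T > 0\<close> \<open>2 \<le> q\<close> \<open>q \<le> r\<close> by (simp add: powr_mult powr_powr)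
  finally show ?thesis
    by (simp add: K_def H_def mult_ac)
qed

theorem lemma3p4:
  fixes \<alpha> s p q T c :: real
  assumes "\<alpha> > 0" and "c > 0" and "T > 0"
    and "2 \<le> p" and "p \<le> q"
    and "s \<ge> - 2 * \<alpha> / q + 1/2 - 1/p"
  shows "\<exists>C::real. C > 0 \<and>
    (\<forall>(M::'w measure) (l :: int^3 \<Rightarrow> 'w \<Rightarrow> real) (a :: int^3 \<Rightarrow> complex^3) (r::real).
       prob_space M
       \<longrightarrow> (\<forall>k. l k \<in> borel_measurable M)
       \<longrightarrow> prob_space.indep_vars M (\<lambda>_. borel) l UNIV
       \<longrightarrow> (\<forall>k. integral\<^sup>L M (l k) = 0)
       \<longrightarrow> (\<forall>k \<gamma>. (\<integral>\<^sup>+\<omega>. ennreal (exp (\<gamma> * l k \<omega>)) \<partial>M) \<le> ennreal (exp (c * \<gamma>^2)))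
       \<longrightarrow> q \<le> r
       \<longrightarrow> in_Hs s a
       \<longrightarrow> mixed_norm M r q p T (free_evol \<alpha> l a) \<le> ennreal (C * sqrt r * Hs_norm s a))"
proof -
  define C where "C = ((2 * pi)^3) powr (1/p) * (2 * T + 2 powr \<alpha>) powr (1/q)
    * (2 * DIM(complex^3) * exp (c * DIM(complex^3)\<^sup>2))"
  have "2 * T + 2 powr \<alpha> > 0"
    using \<open>T > 0\<close> by (simp add: add_pos_nonneg)
  then have "C > 0"
    by (simp add: C_def)
  have "1/p \<le> 1/2"
    using \<open>2 \<le> p\<close> by (simp add: field_simps)
  then have s: "s \<ge> - 2 * \<alpha> / q"
    using assms(6) by linarith
  show ?thesis
  proof (intro exI[of _ C] conjI allI impI)
    fix M :: "'w measure" and l :: "int^3 \<Rightarrow> 'w \<Rightarrow> real" and a :: "int^3 \<Rightarrow> complex^3" and r :: real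
    assume "prob_space M" "prob_space.indep_vars M (\<lambda>_. borel) l UNIV" "q \<le> r" "in_Hs s a"
      and "\<forall>k \<gamma>. (\<integral>\<^sup>+\<omega>. ennreal (exp (\<gamma> * l k \<omega>)) \<partial>M) \<le> ennreal (exp (c * \<gamma>^2))"
    then show "mixed_norm M r q p T (free_evol \<alpha> l a) \<le> ennreal (C * sqrt r * Hs_norm s a)"
      using prob_space.mixed_norm_free_evol_le[of M \<alpha> c T p q r s l a] assms s
      by (simp add: C_def mult_ac)
  qed fact
qed

end
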